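(* Let $\xi\in\mathbb{R}$, $\alpha\ne0$ and $c>0$, let $\phi(u)=(1+u)^3(1-u)^3$ for $|u|\le1$ and $\phi(u)=0$ otherwise, and define $G:\mathbb{R}\to\mathbb{R}$ by $G(x)=x+\alpha\,\phi\big(\frac{x-\xi}{c}\big)(x-\xi)|x-\xi|$. If $c<\frac{1}{6|\alpha|}$, then $G'(x)>0$ for all $x\in\mathbb{R}$, $G'(x)=1$ for all $x$ with $|x-\xi|>c$, and therefore $G$ has a global inverse $G^{-1}$. *)

theory Defs
  imports "HOL-Analysis.Analysis"
begin

definition bump :: "real \<Rightarrow> real" where
  "bump u = (if \<bar>u\<bar> \<le> 1 then (1 + u)^3 * (1 - u)^3 else 0)"

definition Gmap :: "real \<Rightarrow> real \<Rightarrow> real \<Rightarrow> real \<Rightarrow> real" where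
  "Gmap \<xi> \<alpha> c x = x + \<alpha> * bump ((x - \<xi>) / c) * (x - \<xi>) * \<bar>x - \<xi>\<bar>"

end

theory Submission
  imports Defs
begin

text \<open>
  Writing \<open>u = (x - \<xi>) / c\<close> and \<open>\<phi> u = (max 0 (1 - u\<^sup>2))\<^sup>3\<close>, which makes the
  bump visibly \<open>C\<^sup>1\<close>, one computes
  \<open>G' x = 1 + \<alpha> c \<bar>u\<bar> m\<^sup>2 (2 m - 6 u\<^sup>2)\<close> with \<open>m = max 0 (1 - u\<^sup>2)\<close>.
  The correction term is bounded by \<open>6 c \<bar>\<alpha>\<bar> < 1\<close>, so \<open>G' > 0\<close>, and it vanishes for
  \<open>\<bar>u\<bar> > 1\<close>, where \<open>G\<close> is the identity. A strictly increasing continuous map that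
  is the identity outside a bounded interval is onto by the intermediate value theorem.
\<close>

lemma has_real_derivative_max0_power:
  fixes s :: real
  assumes "n \<ge> 2"
  shows "((\<lambda>s. (max 0 s) ^ n) has_real_derivative n * (max 0 s) ^ (n - 1)) (at s)"
proof (cases s "0 :: real" rule: linorder_cases)
  case less
  have "eventually (\<lambda>y. (max 0 y) ^ n = (0::real)) (nhds s)"
    using eventually_nhds_in_open[of "{..<0}" s] less assms by (auto elim!: eventually_mono)
  from DERIV_cong_ev[OF refl this refl] show ?thesis
    using less assms by (simp add: power_0_left)
next
  case greater
  have "eventually (\<lambda>y. (max 0 y) ^ n = y ^ n) (nhds s)"
    using eventually_nhds_in_open[of "{0<..}" s] greater by (auto elim!: eventually_mono)
  moreover have "((\<lambda>y. y ^ n) has_real_derivative n * s ^ (n - 1)) (at s)"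
    using DERIV_pow by simp
  ultimately show ?thesis
    using greater DERIV_cong_ev by fastforce
next
  case equal
  have lim: "((\<lambda>h. (max 0 h) ^ (n - 1)) \<longlongrightarrow> 0) (at (0::real))"
  proof -
    have "((\<lambda>h. (max 0 h) ^ (n - 1)) \<longlongrightarrow> (max 0 0) ^ (n - 1)) (at (0::real))"
      by (intro tendsto_intros)
    then show ?thesis
      using assms by (simp only: max.idem power_0_left) simp
  qed
  have "\<bar>(max 0 h) ^ n / h\<bar> \<le> \<bar>(max 0 h) ^ (n - 1)\<bar> * 1" for h :: real
  proof -
    have "(max 0 h) ^ n = max 0 h * (max 0 h) ^ (n - 1)"
      using assms by (simp flip: power_Suc)
    then have "\<bar>(max 0 h) ^ n / h\<bar> = (max 0 h) ^ (n - 1) * (max 0 h / \<bar>h\<bar>)"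
      by simp
    also have "\<dots> \<le> \<bar>(max 0 h) ^ (n - 1)\<bar> * 1"
      by (intro mult_mono) (auto simp: divide_le_eq_1)
    finally show ?thesis .
  qed
  then have "((\<lambda>h. (max 0 h) ^ n / h) \<longlongrightarrow> 0) (at (0::real))"
    by (intro tendsto_0_le[OF lim, of _ 1]) (auto intro: always_eventually)
  then show ?thesis
    using equal assms by (simp add: DERIV_def power_0_left)
qed

lemma has_real_derivative_mult_abs:
  fixes t :: real
  shows "((\<lambda>t. t * \<bar>t\<bar>) has_real_derivative 2 * \<bar>t\<bar>) (at t)"
proof -
  have split: "(\<lambda>t::real. t * \<bar>t\<bar>) = (\<lambda>t. (max 0 t)\<^sup>2 - (max 0 (- t))\<^sup>2)"
    by (auto simp: fun_eq_iff max_def power2_eq_square)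
  have pos: "((\<lambda>t. (max 0 t)\<^sup>2) has_real_derivative 2 * max 0 t) (at t)"
    using has_real_derivative_max0_power[where n = 2] by simp
  have neg: "((\<lambda>t. (max 0 (- t))\<^sup>2) has_real_derivative 2 * max 0 (- t) * - 1) (at t)"
    using DERIV_chain2[OF has_real_derivative_max0_power[where n = 2] DERIV_minus[OF DERIV_ident]]
    by simp
  have "2 * max 0 t - 2 * max 0 (- t) * - 1 = 2 * \<bar>t\<bar>"
    by (simp add: max_def)
  with DERIV_diff[OF pos neg] show ?thesis
    unfolding split by simp
qed

lemma DERIV_mult_abs:
  "(f has_real_derivative f') (at x) \<Longrightarrow>
    ((\<lambda>x. f x * \<bar>f x\<bar>) has_real_derivative 2 * \<bar>f x\<bar> * f') (at x)"
  by (rule DERIV_chain2[OF has_real_derivative_mult_abs])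

lemma bump_eq_max0_cube: "bump u = (max 0 (1 - u\<^sup>2)) ^ 3"
proof (cases "\<bar>u\<bar> \<le> 1")
  case True
  then have "u\<^sup>2 \<le> 1"
    by (simp add: abs_square_le_1)
  with True show ?thesis
    by (simp add: bump_def power_mult_distrib[symmetric] algebra_simps power2_eq_square)
next
  case False
  then have "1 < u\<^sup>2"
    using abs_square_le_1[of u] by linarith
  with False show ?thesis
    by (simp add: bump_def)
qed

lemma DERIV_bump:
  "(f has_real_derivative f') (at x) \<Longrightarrow>
    ((\<lambda>x. bump (f x)) has_real_derivative - 6 * f x * (max 0 (1 - (f x)\<^sup>2))\<^sup>2 * f') (at x)"
  unfolding bump_eq_max0_cube
  using DERIV_chain2[OF has_real_derivative_max0_power[where n = 3]
      DERIV_diff[OF DERIV_const DERIV_power[where n = 2]]]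
  by (simp add: algebra_simps)

lemma has_real_derivative_Gmap:
  assumes "c > 0" and u: "u = (x - \<xi>) / c"
  shows "(Gmap \<xi> \<alpha> c has_real_derivative
    1 + \<alpha> * c * \<bar>u\<bar> * (max 0 (1 - u\<^sup>2))\<^sup>2 * (2 * max 0 (1 - u\<^sup>2) - 6 * u\<^sup>2)) (at x)"
proof -
  have G: "Gmap \<xi> \<alpha> c = (\<lambda>x. x + \<alpha> * (bump ((x - \<xi>) / c) * ((x - \<xi>) * \<bar>x - \<xi>\<bar>)))"
    by (simp add: Gmap_def fun_eq_iff mult.assoc)
  have "((\<lambda>x. (x - \<xi>) / c) has_real_derivative 1 / c) (at x)"
    using \<open>c > 0\<close> by (auto intro!: derivative_eq_intros)
  from DERIV_bump[OF this] have bump': "((\<lambda>x. bump ((x - \<xi>) / c)) has_real_derivative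
      - 6 * u * (max 0 (1 - u\<^sup>2))\<^sup>2 * (1 / c)) (at x)"
    by (simp only: u)
  have "((\<lambda>x. x - \<xi>) has_real_derivative 1) (at x)"
    by (auto intro!: derivative_eq_intros)
  from DERIV_mult_abs[OF this] have mult_abs': "((\<lambda>x. (x - \<xi>) * \<bar>x - \<xi>\<bar>) has_real_derivative
      2 * \<bar>x - \<xi>\<bar> * 1) (at x)" .
  have "x - \<xi> = c * u" and "\<bar>x - \<xi>\<bar> = c * \<bar>u\<bar>"
    using assms by (simp_all add: abs_mult)
  then have slope: "1 + \<alpha> * (- 6 * u * (max 0 (1 - u\<^sup>2))\<^sup>2 * (1 / c) * ((x - \<xi>) * \<bar>x - \<xi>\<bar>)
      + 2 * \<bar>x - \<xi>\<bar> * 1 * bump ((x - \<xi>) / c))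
    = 1 + \<alpha> * c * \<bar>u\<bar> * (max 0 (1 - u\<^sup>2))\<^sup>2 * (2 * max 0 (1 - u\<^sup>2) - 6 * u\<^sup>2)"
    using \<open>c > 0\<close> unfolding u[symmetric] bump_eq_max0_cube
    by (simp add: power2_eq_square power3_eq_cube algebra_simps)
  show ?thesis
    using DERIV_add[OF DERIV_ident DERIV_cmult[OF DERIV_mult[OF bump' mult_abs'], of \<alpha>]]
    unfolding G slope .
qed

text \<open>The left-hand side is \<open>\<bar>\<psi>' u\<bar>\<close> for \<open>\<psi> u = bump u * u * \<bar>u\<bar>\<close>.\<close>

lemma bump_slope_bound:
  fixes u :: real
  shows "\<bar>u\<bar> * (max 0 (1 - u\<^sup>2))\<^sup>2 * \<bar>2 * max 0 (1 - u\<^sup>2) - 6 * u\<^sup>2\<bar> \<le> 6"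
proof (cases "u\<^sup>2 \<le> 1")
  case True
  have "\<bar>u\<bar> \<le> 1"
    using True by (simp add: abs_square_le_1)
  moreover have "(1 - u\<^sup>2)\<^sup>2 \<le> 1"
    using True by (simp add: power_le_one)
  moreover have "\<bar>2 * (1 - u\<^sup>2) - 6 * u\<^sup>2\<bar> \<le> 6"
    using True zero_le_power2[of u] by (smt (verit))
  ultimately have "\<bar>u\<bar> * (1 - u\<^sup>2)\<^sup>2 * \<bar>2 * (1 - u\<^sup>2) - 6 * u\<^sup>2\<bar> \<le> 1 * 1 * 6"
    by (intro mult_mono) auto
  with True show ?thesis
    by simp
qed simp

lemma Gmap_slope_pos:
  fixes \<alpha> c u :: real
  assumes "c > 0" and "6 * c * \<bar>\<alpha>\<bar> < 1"
  shows "1 + \<alpha> * c * \<bar>u\<bar> * (max 0 (1 - u\<^sup>2))\<^sup>2 * (2 * max 0 (1 - u\<^sup>2) - 6 * u\<^sup>2) > 0"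
proof -
  define m where "m = max 0 (1 - u\<^sup>2)"
  have "\<bar>\<alpha> * c * \<bar>u\<bar> * m\<^sup>2 * (2 * m - 6 * u\<^sup>2)\<bar> = \<bar>\<alpha>\<bar> * c * (\<bar>u\<bar> * m\<^sup>2 * \<bar>2 * m - 6 * u\<^sup>2\<bar>)"
    using \<open>c > 0\<close> by (simp add: abs_mult)
  also have "\<dots> \<le> \<bar>\<alpha>\<bar> * c * 6"
    using bump_slope_bound[of u] \<open>c > 0\<close> unfolding m_def by (intro mult_left_mono) auto
  also have "\<dots> = 6 * c * \<bar>\<alpha>\<bar>"
    by (simp add: ac_simps)
  finally show ?thesis
    using assms(2) unfolding m_def by linarith
qed

lemma Gmap_eq_outside:
  assumes "c > 0" and "\<bar>x - \<xi>\<bar> > c"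
  shows "Gmap \<xi> \<alpha> c x = x"
  using assms by (simp add: Gmap_def bump_def)

lemma bij_if_pos_deriv_and_eq_id_outside:
  fixes f :: "real \<Rightarrow> real"
  assumes deriv: "\<And>x. \<exists>D. (f has_real_derivative D) (at x) \<and> D > 0"
    and id: "\<And>x. \<bar>x - a\<bar> > r \<Longrightarrow> f x = x"
  shows "bij f"
proof (rule bijI)
  have "f x < f y" if "x < y" for x y
    using that by (rule DERIV_pos_imp_increasing) (use deriv in blast)
  then have "strict_mono f"
    by (rule strict_monoI)
  then show "inj f"
    by (rule strict_mono_imp_inj_on)
  have "\<exists>x. f x = y" for y
  proof -
    define lo where "lo = min y (a - \<bar>r\<bar>) - 1"
    define hi where "hi = max y (a + \<bar>r\<bar>) + 1"
    have "f lo = lo"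
      unfolding lo_def by (intro id) arith
    moreover have "f hi = hi"
      unfolding hi_def by (intro id) arith
    moreover have "lo \<le> y" "y \<le> hi"
      unfolding lo_def hi_def by arith+
    moreover have "isCont f x" for x
      using deriv DERIV_isCont by blast
    ultimately have "\<exists>x\<ge>lo. x \<le> hi \<and> f x = y"
      by (intro IVT) auto
    then show ?thesis
      by blast
  qed
  then show "surj f"
    by (metis surjI)
qed

theorem lemma2p4:
  fixes \<xi> \<alpha> c :: real
  assumes "\<alpha> \<noteq> 0" and "c > 0" and "c < 1 / (6 * \<bar>\<alpha>\<bar>)"
  shows "(\<forall>x. \<exists>D. (Gmap \<xi> \<alpha> c has_real_derivative D) (at x) \<and> D > 0)
       \<and> (\<forall>x. \<bar>x - \<xi>\<bar> > c \<longrightarrow> (Gmap \<xi> \<alpha> c has_real_derivative 1) (at x))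
       \<and> bij (Gmap \<xi> \<alpha> c)"
proof -
  have small: "6 * c * \<bar>\<alpha>\<bar> < 1"
    using assms by (simp add: field_simps)
  have pos: "\<exists>D. (Gmap \<xi> \<alpha> c has_real_derivative D) (at x) \<and> D > 0" for x
    using has_real_derivative_Gmap[OF \<open>c > 0\<close> refl] Gmap_slope_pos[OF \<open>c > 0\<close> small] by blast
  have one: "(Gmap \<xi> \<alpha> c has_real_derivative 1) (at x)" if "\<bar>x - \<xi>\<bar> > c" for x
  proof -
    define u where "u = (x - \<xi>) / c"
    have "1 < \<bar>u\<bar>"
      using that \<open>c > 0\<close> by (simp add: u_def)
    then have "max 0 (1 - u\<^sup>2) = 0"
      using abs_square_le_1[of u] by simp
    with has_real_derivative_Gmap[OF \<open>c > 0\<close> u_def] show ?thesis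
      by simp
  qed
  have "bij (Gmap \<xi> \<alpha> c)"
    using bij_if_pos_deriv_and_eq_id_outside[OF pos Gmap_eq_outside[OF \<open>c > 0\<close>]] .
  with pos one show ?thesis
    by blast
qed

end
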